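(* Let $p$ be an odd prime. If $M$ is a discrete $A$-module, then $M$, with the $R$-action obtained by restriction along the inclusion $R\subset A$, is a Bousfield module.
   Context: $\mathbb{Z}_{(p)}$ denotes the $p$-local integers. $A$ is the ring of degree zero stable operations in $p$-local complex $K$-theory. Fix $q$ primitive mod $p^2$, $\Psi^q\in A$ the Adams operation, $q_i=q^{(-1)^i\lfloor i/2\rfloor}$, $\Theta_n(X)=\prod_{i=1}^n(X-q_i)$, $\Phi_n=\Theta_n(\Psi^q)$; every element of $A$ is uniquely a convergent sum $\sum_{n\ge0}a_n\Phi_n$ with $a_n\in\mathbb{Z}_{(p)}$, and $A_m=\{\sum_{n\ge m}a_n\Phi_n\}$. An $A$-module $M$ is discrete if each $x\in M$ satisfies $A_nx=0$ for some $n$. Let $R=\mathbb{Z}_{(p)}[\mathbb{Z}_{(p)}^\times]$, writing $\Psi^j$ for $j\in\mathbb{Z}_{(p)}^\times$; mapping $\Psi^j$ to the Adams operation $\Psi^j\in A$ gives $R\subset A$. A Bousfield module is an $R$-module $M$ such that for each $x\in M$: (a) $Rx$ is finitely generated over $\mathbb{Z}_{(p)}$; (b) for each $j\in\mathbb{Z}_{(p)}^\times$, $\Psi^j$ acts on $Rx\otimes\mathbb{Q}$ by a diagonalisable matrix whose eigenvalues are integer powers of $j$; (c) for each $m\ge1$ the action of $\mathbb{Z}_{(p)}^\times$ on $Rx/p^mRx$ factors through $\mathbb{Z}_{(p)}^\times\to(\mathbb{Z}/p^k\mathbb{Z})^\times$ for sufficiently large $k$. *)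

theory Defs
  imports "HOL-Number_Theory.Number_Theory"
begin

definition plocal :: "nat \<Rightarrow> rat \<Rightarrow> bool" where
  "plocal p r \<longleftrightarrow> \<not> (int p dvd snd (quotient_of r))"

definition plocal_unit :: "nat \<Rightarrow> rat \<Rightarrow> bool" where
  "plocal_unit p j \<longleftrightarrow> j \<noteq> 0 \<and> plocal p j \<and> plocal p (inverse j)"

definition primitive_mod_p2 :: "nat \<Rightarrow> int \<Rightarrow> bool" where
  "primitive_mod_p2 p q \<longleftrightarrow> residue_primroot (p^2) (nat (q mod int (p^2)))"

definition qexp :: "nat \<Rightarrow> int" where
  "qexp i = (-1) ^ i * int (i div 2)"

definition qnode :: "int \<Rightarrow> nat \<Rightarrow> rat" where
  "qnode q i = (of_int q) powi (qexp i)"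

definition Theta :: "int \<Rightarrow> nat \<Rightarrow> rat \<Rightarrow> rat" where
  "Theta q n X = (\<Prod>i=1..n. X - qnode q i)"

text \<open>Index i with e_i = k; Theta_n(q^k) = 0 for all n >= node_index k.\<close>
definition node_index :: "int \<Rightarrow> nat" where
  "node_index k = (if k > 0 then nat (2 * k) else nat (1 - 2 * k))"

text \<open>Model of A: an operation is recorded by its eigenvalue on the weight-k
  part for each k in Z, i.e. Psi^q |-> (k |-> q^k).  The element
  sum_{n>=m} a_n Phi_n (a_n in Z_(p)) is the function
  k |-> sum_n a_n Theta_n(q^k), a finite sum since Theta_n(q^k)=0 for
  n >= node_index k.  Ring operations are pointwise.\<close>
definition opA_from :: "nat \<Rightarrow> int \<Rightarrow> nat \<Rightarrow> (int \<Rightarrow> rat) set" where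
  "opA_from p q m = {f. \<exists>a :: nat \<Rightarrow> rat. (\<forall>n. plocal p (a n)) \<and> (\<forall>n<m. a n = 0) \<and>
       (\<forall>k. f k = (\<Sum>n<node_index k. a n * Theta q n ((of_int q) powi k)))}"

abbreviation opA :: "nat \<Rightarrow> int \<Rightarrow> (int \<Rightarrow> rat) set" where
  "opA p q \<equiv> opA_from p q 0"

definition scal :: "rat \<Rightarrow> int \<Rightarrow> rat" where
  "scal c = (\<lambda>k. c)"

definition adams :: "rat \<Rightarrow> int \<Rightarrow> rat" where
  "adams j = (\<lambda>k. j powi k)"

definition is_A_module :: "nat \<Rightarrow> int \<Rightarrow> ((int \<Rightarrow> rat) \<Rightarrow> 'm::ab_group_add \<Rightarrow> 'm) \<Rightarrow> bool" where
  "is_A_module p q act \<longleftrightarrow>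
     (\<forall>a\<in>opA p q. \<forall>x y. act a (x + y) = act a x + act a y) \<and>
     (\<forall>a\<in>opA p q. \<forall>b\<in>opA p q. \<forall>x. act (\<lambda>k. a k + b k) x = act a x + act b x) \<and>
     (\<forall>a\<in>opA p q. \<forall>b\<in>opA p q. \<forall>x. act (\<lambda>k. a k * b k) x = act a (act b x)) \<and>
     (\<forall>x. act (\<lambda>k. 1) x = x)"

definition discrete_A_module :: "nat \<Rightarrow> int \<Rightarrow> ((int \<Rightarrow> rat) \<Rightarrow> 'm::ab_group_add \<Rightarrow> 'm) \<Rightarrow> bool" where
  "discrete_A_module p q act \<longleftrightarrow> is_A_module p q act \<and>
     (\<forall>x. \<exists>n. \<forall>a\<in>opA_from p q n. act a x = 0)"

definition zp_span :: "nat \<Rightarrow> ((int \<Rightarrow> rat) \<Rightarrow> 'm::ab_group_add \<Rightarrow> 'm) \<Rightarrow> 'm set \<Rightarrow> 'm set" where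
  "zp_span p act G = {\<Sum>g\<in>G. act (scal (c g)) g | c. \<forall>g\<in>G. plocal p (c g)}"

text \<open>The cyclic R-submodule Rx, R = Z_(p)[Z_(p)^x] acting through Psi^j.\<close>
definition Rcyc :: "nat \<Rightarrow> ((int \<Rightarrow> rat) \<Rightarrow> 'm::ab_group_add \<Rightarrow> 'm) \<Rightarrow> 'm \<Rightarrow> 'm set" where
  "Rcyc p act x = {\<Sum>j\<in>J. act (scal (c j)) (act (adams j) x) | J c.
       finite J \<and> (\<forall>j\<in>J. plocal_unit p j) \<and> (\<forall>j\<in>J. plocal p (c j))}"

definition bousfield_module :: "nat \<Rightarrow> ((int \<Rightarrow> rat) \<Rightarrow> 'm::ab_group_add \<Rightarrow> 'm) \<Rightarrow> bool" where
  "bousfield_module p act \<longleftrightarrow> (\<forall>x.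
     \<comment> \<open>(a) Rx finitely generated over Z_(p)\<close>
     (\<exists>G. finite G \<and> G \<subseteq> Rcyc p act x \<and> Rcyc p act x = zp_span p act G) \<and>
     \<comment> \<open>(b) Rx tensor Q is spanned by eigenvectors of Psi^j with eigenvalues j^k, k in Z\<close>
     (\<forall>j. plocal_unit p j \<longrightarrow> (\<forall>y\<in>Rcyc p act x.
        \<exists>c zs. c \<noteq> 0 \<and> plocal p c \<and> act (scal c) y = sum_list (map fst zs) \<and>
          (\<forall>(z, k)\<in>set zs. z \<in> Rcyc p act x \<and>
             (\<exists>d. d \<noteq> 0 \<and> plocal p d \<and>
                act (scal d) (act (adams j) z - act (scal (j powi k)) z) = 0)))) \<and>
     \<comment> \<open>(c) action on Rx/p^m Rx factors through (Z/p^k)^x for large k\<close>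
     (\<forall>m::nat. m \<ge> 1 \<longrightarrow> (\<exists>k0. \<forall>k\<ge>k0. \<forall>j j'. plocal_unit p j \<longrightarrow> plocal_unit p j' \<longrightarrow>
        plocal p ((j - j') / of_nat (p ^ k)) \<longrightarrow>
        (\<forall>y\<in>Rcyc p act x. \<exists>z\<in>Rcyc p act x.
           act (adams j) y - act (adams j') y = act (scal (of_nat (p ^ m))) z))))"

end

theory Submission
  imports Defs
begin

text \<open>An element of \<open>A\<close> is recorded by its eigenvalues \<open>k \<mapsto> a(q\<^sup>k)\<close>, and its coefficients
  \<open>a\<^sub>n\<close> in \<open>\<Sum> a\<^sub>n \<Phi>\<^sub>n\<close> are the Newton coefficients for the nodes \<open>q\<^sub>1, q\<^sub>2, \<dots>\<close>.
  If \<open>A\<^sub>n x = 0\<close>, then \<open>f x\<close> only depends on the values of \<open>f\<close> at \<open>q\<^sub>1, \<dots>, q\<^sub>n\<close>, where \<open>f\<close>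
  agrees with a \<open>\<int>\<^sub>(\<^sub>p\<^sub>)\<close>-combination of \<open>\<Psi>\<^sup>1, \<Psi>\<^sup>q, \<dots>, \<Psi>\<^bsup>q^(n-1)\<^esup>\<close>; hence \<open>Ax = Rx\<close> is finitely
  generated. The first \<open>n\<close> Newton coefficients have a common denominator \<open>C\<close>, so \<open>C f x\<close> is a sum of
  elements \<open>h x\<close> with \<open>h\<close> supported at a single node \<open>q\<^sub>i\<close>, and such an element is an eigenvector
  of \<open>\<Psi>\<^sup>j\<close> with eigenvalue \<open>j\<^sup>e\<close>, \<open>q\<^sub>i = q\<^sup>e\<close>. Finally, as \<open>q\<close> generates \<open>\<int>\<^sub>p\<^sup>\<times>\<close> topologically
  (\<open>q\<close> is primitive modulo \<open>p\<^sup>2\<close> and \<open>p\<close> is odd), every \<open>\<Psi>\<^sup>j\<close> lies in \<open>A\<close>; and if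
  \<open>j \<equiv> j'\<close> modulo a high power of \<open>p\<close>, then \<open>(\<Psi>\<^sup>j - \<Psi>\<^bsup>j'\<^esup>) f\<close> is divisible by \<open>p\<^sup>m\<close> at the first
  \<open>n\<close> nodes, hence agrees there with \<open>p\<^sup>m h\<close> for some \<open>h \<in> A\<close>.\<close>

section \<open>\<open>p\<close>-local rationals\<close>

lemma plocal_iff_fraction:
  assumes "prime p"
  shows "plocal p r \<longleftrightarrow> (\<exists>a b. \<not> int p dvd b \<and> r = of_int a / of_int b)"
proof
  obtain a b where ab: "quotient_of r = (a, b)" by (cases "quotient_of r")
  then have "r = of_int a / of_int b" by (simp add: quotient_of_div)
  then show "plocal p r \<Longrightarrow> \<exists>a b. \<not> int p dvd b \<and> r = of_int a / of_int b"
    using ab unfolding plocal_def by auto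
next
  assume "\<exists>a b. \<not> int p dvd b \<and> r = of_int a / of_int b"
  then obtain a b where nb: "\<not> int p dvd b" and r: "r = of_int a / of_int b" by blast
  obtain a' b' where ab': "quotient_of r = (a', b')" by (cases "quotient_of r")
  have "b \<noteq> 0" "b' > 0" using nb ab' quotient_of_denom_pos by auto
  moreover have "of_int a / of_int b = (of_int a' / of_int b' :: rat)"
    using r ab' quotient_of_div by metis
  ultimately have "a * b' = a' * b" by (simp add: frac_eq_eq) (metis of_int_eq_iff of_int_mult)
  then have "b' dvd a' * b" by (metis dvd_triv_right)
  moreover have "coprime a' b'" using ab' quotient_of_coprime by blast
  ultimately have "b' dvd b" by (meson coprime_commute coprime_dvd_mult_right_iff)
  then show "plocal p r" unfolding plocal_def using ab' nb dvd_trans by auto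
qed

locale p_local =
  fixes p :: nat
  assumes prime_p: "prime p"
begin

lemma prime_int_p: "prime (int p)"
  using prime_p by simp

lemma plocal_fractionI: "\<not> int p dvd b \<Longrightarrow> plocal p (of_int a / of_int b)"
  using plocal_iff_fraction[OF prime_p] by blast

lemma plocal_fractionE:
  assumes "plocal p r"
  obtains a b where "\<not> int p dvd b" "b \<noteq> 0" "r = of_int a / of_int b"
  using assms plocal_iff_fraction[OF prime_p] by (metis dvd_0_right)

lemma plocal_of_int [simp]: "plocal p (of_int a)"
  using plocal_fractionI[of 1 a] prime_int_p not_prime_unit by auto

lemma plocal_0 [simp]: "plocal p 0"
  and plocal_1 [simp]: "plocal p 1"
  and plocal_of_nat [simp]: "plocal p (of_nat n)"
  using plocal_of_int[of 0] plocal_of_int[of 1] plocal_of_int[of "int n"] by simp_all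

lemma plocal_add [intro]:
  assumes "plocal p x" "plocal p y"
  shows "plocal p (x + y)"
proof -
  obtain a b c d where "\<not> int p dvd b" "b \<noteq> 0" "x = of_int a / of_int b"
    and "\<not> int p dvd d" "d \<noteq> 0" "y = of_int c / of_int d"
    using assms by (elim plocal_fractionE)
  moreover from this have "\<not> int p dvd b * d"
    using prime_int_p by (simp add: prime_dvd_mult_iff)
  moreover have "x + y = of_int (a * d + c * b) / of_int (b * d)"
    using calculation by (simp add: field_simps)
  ultimately show ?thesis using plocal_fractionI[of "b * d" "a * d + c * b"] by simp
qed

lemma plocal_mult [intro]:
  assumes "plocal p x" "plocal p y"
  shows "plocal p (x * y)"
proof -
  obtain a b c d where "\<not> int p dvd b" "b \<noteq> 0" "x = of_int a / of_int b"
    and "\<not> int p dvd d" "d \<noteq> 0" "y = of_int c / of_int d"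
    using assms by (elim plocal_fractionE)
  moreover from this have "\<not> int p dvd b * d"
    using prime_int_p by (simp add: prime_dvd_mult_iff)
  ultimately show ?thesis
    using plocal_fractionI[of "b * d" "a * c"] by simp
qed

lemma plocal_uminus [intro]: "plocal p x \<Longrightarrow> plocal p (- x)"
  using plocal_mult[OF plocal_of_int[of "-1"]] by simp

lemma plocal_diff [intro]: "plocal p x \<Longrightarrow> plocal p y \<Longrightarrow> plocal p (x - y)"
  using plocal_add[of x "- y"] by auto

lemma plocal_sum [intro]: "(\<And>i. i \<in> A \<Longrightarrow> plocal p (f i)) \<Longrightarrow> plocal p (sum f A)"
  by (induction A rule: infinite_finite_induct) auto

lemma plocal_prod [intro]: "(\<And>i. i \<in> A \<Longrightarrow> plocal p (f i)) \<Longrightarrow> plocal p (prod f A)"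
  by (induction A rule: infinite_finite_induct) auto

lemma plocal_power [intro]: "plocal p x \<Longrightarrow> plocal p (x ^ n)"
  by (induction n) auto

lemma plocal_unit_plocal: "plocal_unit p j \<Longrightarrow> plocal p j"
  unfolding plocal_unit_def by auto

lemma plocal_unit_powi [intro]: "plocal_unit p j \<Longrightarrow> plocal p (j powi k)"
  unfolding plocal_unit_def power_int_def by auto

lemma plocal_unit_powi_unit: "plocal_unit p j \<Longrightarrow> plocal_unit p (j powi k)"
  unfolding plocal_unit_def
  by (auto simp: power_int_inverse[symmetric] intro!: plocal_unit_powi[unfolded plocal_unit_def])

lemma plocal_unit_of_int: "\<not> int p dvd a \<Longrightarrow> plocal_unit p (of_int a)"
  using plocal_fractionI[of a 1] unfolding plocal_unit_def by (auto simp: divide_inverse)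

lemma plocal_unit_fraction:
  assumes "plocal_unit p j"
  obtains a b where "\<not> int p dvd a" "\<not> int p dvd b" "j = of_int a / of_int b"
proof -
  obtain a b where ab: "\<not> int p dvd b" "b \<noteq> 0" "j = of_int a / of_int b"
    using assms unfolding plocal_unit_def by (auto elim: plocal_fractionE)
  obtain c d where cd: "\<not> int p dvd d" "d \<noteq> 0" "inverse j = of_int c / of_int d"
    using assms unfolding plocal_unit_def by (auto elim: plocal_fractionE)
  have "a \<noteq> 0" using assms ab unfolding plocal_unit_def by auto
  with ab cd have "b * d = c * a"
    by (simp add: frac_eq_eq) (metis of_int_eq_iff of_int_mult)
  then have "\<not> int p dvd a"
    using ab(1) cd(1) prime_int_p by (metis dvd_mult prime_dvd_mult_iff)
  with ab that show thesis by blast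
qed

lemma plocal_prime_power_div:
  assumes "C \<noteq> 0" "N \<ge> multiplicity (int p) C"
  shows "plocal p (of_nat p ^ N / of_int C)"
proof -
  define m where "m = multiplicity (int p) C"
  obtain c where c: "C = int p ^ m * c" "\<not> int p dvd c"
    using multiplicity_decompose'[OF assms(1)] prime_int_p not_prime_unit unfolding m_def by blast
  have "(of_nat p ^ N :: rat) = of_nat p ^ (N - m) * of_nat p ^ m"
    using assms(2) unfolding m_def by (simp flip: power_add)
  then have "of_nat p ^ N / of_int C = (of_int (int p ^ (N - m)) / of_int c :: rat)"
    using c assms(1) prime_gt_0_nat[OF prime_p] by simp
  then show ?thesis
    using plocal_fractionI[OF c(2)] by (metis of_int_of_nat_eq of_int_power)
qed

lemma plocal_power_diff_factor:
  assumes "plocal p x" "plocal p y"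
  obtains d where "plocal p d" "x ^ n - y ^ n = (x - y) * d"
proof
  show "plocal p (\<Sum>i<n. y ^ (n - Suc i) * x ^ i)"
    by (intro plocal_sum plocal_mult plocal_power assms)
qed (rule power_diff_sumr2)

lemma plocal_powi_diff_factor:
  assumes j: "plocal_unit p j" and j': "plocal_unit p j'"
  obtains d where "plocal p d" "j powi e - j' powi e = (j - j') * d"
proof (cases "e \<ge> 0")
  case True
  obtain d where "plocal p d" "j ^ nat e - j' ^ nat e = (j - j') * d"
    using plocal_power_diff_factor[OF plocal_unit_plocal[OF j] plocal_unit_plocal[OF j']] .
  with True show thesis using that by (simp add: power_int_def)
next
  case False
  define a b where "a = inverse j" and "b = inverse j'"
  have ab: "plocal p a" "plocal p b"
    using j j' unfolding a_def b_def plocal_unit_def by auto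
  obtain d where d: "plocal p d" "a ^ nat (- e) - b ^ nat (- e) = (a - b) * d"
    using plocal_power_diff_factor[OF ab] .
  have "a - b = (j - j') * (- (a * b))"
    using j j' unfolding a_def b_def plocal_unit_def by (simp add: field_simps)
  with False d(2) have "j powi e - j' powi e = (j - j') * (- (a * b) * d)"
    unfolding a_def b_def by (simp add: power_int_def power_inverse)
  moreover have "plocal p (- (a * b) * d)" using ab d(1) by blast
  ultimately show thesis using that by blast
qed


lemma plocal_powi_diff_div_prime_power:
  assumes j: "plocal_unit p j" and j': "plocal_unit p j'"
    and jj': "plocal p ((j - j') / of_nat (p ^ k))" and "N \<le> k"
  shows "plocal p ((j powi e - j' powi e) / of_nat p ^ N)"
proof -
  obtain d where d: "plocal p d" "j powi e - j' powi e = (j - j') * d"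
    using plocal_powi_diff_factor[OF j j'] .
  have "(of_nat (p ^ k) :: rat) = of_nat p ^ N * of_nat (p ^ (k - N))"
    using \<open>N \<le> k\<close> by (simp flip: power_add)
  then have "(j powi e - j' powi e) / of_nat p ^ N = (j - j') / of_nat (p ^ k) * of_nat (p ^ (k - N)) * d"
    unfolding d(2) using prime_gt_0_nat[OF prime_p] by (simp add: field_simps)
  then show ?thesis using plocal_mult[OF plocal_mult[OF jj' plocal_of_nat] d(1)] by (simp only:)
qed

end

section \<open>The ring \<open>A\<close> via Newton interpolation\<close>

lemma qexp_node_index [simp]: "qexp (node_index k) = k"
proof (cases "k > 0")
  case True
  then have "node_index k = 2 * nat k" by (simp add: node_index_def nat_mult_distrib)
  with True show ?thesis by (simp add: qexp_def)
next
  case False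
  then have "node_index k = Suc (2 * nat (- k))" by (simp add: node_index_def nat_mult_distrib)
  with False show ?thesis by (simp add: qexp_def)
qed

lemma node_index_qexp [simp]:
  assumes "i \<ge> 1"
  shows "node_index (qexp i) = i"
proof (cases "even i")
  case True
  then obtain t where "i = 2 * t" by (elim evenE)
  with assms show ?thesis by (simp add: qexp_def node_index_def)
next
  case False
  then obtain t where "i = 2 * t + 1" by (elim oddE)
  then show ?thesis by (simp add: qexp_def node_index_def)
qed

lemma node_index_ge_1: "node_index k \<ge> 1"
  unfolding node_index_def by (simp add: Suc_le_eq)

lemma qexp_inject: "i \<ge> 1 \<Longrightarrow> l \<ge> 1 \<Longrightarrow> qexp i = qexp l \<Longrightarrow> i = l"
  by (metis node_index_qexp)

lemma power_int_inject:
  fixes x :: "'a :: linordered_field"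
  assumes "\<bar>x\<bar> > 1" "x powi m = x powi n"
  shows "m = n"
proof (rule ccontr)
  assume "m \<noteq> n"
  then have "\<bar>x\<bar> powi m \<noteq> \<bar>x\<bar> powi n"
    using assms(1) power_int_strict_increasing[of m n "\<bar>x\<bar>"]
      power_int_strict_increasing[of n m "\<bar>x\<bar>"]
    by (cases "m < n") auto
  with assms(2) show False by (simp flip: power_int_abs)
qed

lemma Theta_0 [simp]: "Theta q 0 X = 1"
  by (simp add: Theta_def)

lemma Theta_Suc: "Theta q (Suc r) X = Theta q r X * (X - qnode q (Suc r))"
  by (simp add: Theta_def)

text \<open>The coefficient \<open>a\<^sub>m\<close> of \<open>f = \<Sum> a\<^sub>n \<Theta>\<^sub>n\<close>, recovered by Newton's recursion from the values
  of \<open>f\<close> at the nodes \<open>q\<^sub>1, \<dots>, q\<^sub>m\<^sub>+\<^sub>1\<close>.\<close>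

function newton_coeff :: "int \<Rightarrow> (int \<Rightarrow> rat) \<Rightarrow> nat \<Rightarrow> rat" where
  "newton_coeff q f m =
     (f (qexp (Suc m)) - (\<Sum>r<m. newton_coeff q f r * Theta q r (qnode q (Suc m))))
       / Theta q m (qnode q (Suc m))"
  by auto
termination by (relation "measure (\<lambda>(q, f, m). m)") auto

declare newton_coeff.simps [simp del]

locale adams_nodes = p_local +
  fixes q :: int
  assumes q_coprime: "\<not> int p dvd q" and q_abs_gt_1: "\<bar>q\<bar> > 1"
begin

abbreviation Q :: rat where "Q \<equiv> of_int q"

lemma Q_unit: "plocal_unit p Q"
  using plocal_unit_of_int[OF q_coprime] .

lemma plocal_Q_powi [intro]: "plocal p (Q powi k)"
  using plocal_unit_powi[OF Q_unit] .

lemma plocal_qnode [intro]: "plocal p (qnode q i)"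
  unfolding qnode_def using plocal_Q_powi .

lemma qnode_inject: "i \<ge> 1 \<Longrightarrow> l \<ge> 1 \<Longrightarrow> qnode q i = qnode q l \<Longrightarrow> i = l"
  unfolding qnode_def using power_int_inject[of Q] q_abs_gt_1 qexp_inject by fastforce

lemma plocal_Theta [intro]: "plocal p X \<Longrightarrow> plocal p (Theta q r X)"
  unfolding Theta_def by blast

lemma Theta_eq_0:
  assumes "node_index k \<le> r"
  shows "Theta q r (Q powi k) = 0"
proof -
  have "node_index k \<in> {1..r}" using assms node_index_ge_1 by auto
  then show ?thesis unfolding Theta_def qnode_def by (intro prod_zero bexI[of _ "node_index k"]) auto
qed

lemma Theta_qnode_eq_0: "l \<ge> 1 \<Longrightarrow> l \<le> r \<Longrightarrow> Theta q r (qnode q l) = 0"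
  using Theta_eq_0[of "qexp l" r] by (simp add: qnode_def)

lemma Theta_qnode_neq_0:
  assumes "r < l"
  shows "Theta q r (qnode q l) \<noteq> 0"
proof -
  have "qnode q l \<noteq> qnode q i" if "i \<in> {1..r}" for i
    using that assms qnode_inject[of l i] by auto
  then show ?thesis unfolding Theta_def by auto
qed

lemma newton_coeff_recursion:
  "Theta q m (qnode q (Suc m)) * newton_coeff q f m
     = f (qexp (Suc m)) - (\<Sum>r<m. newton_coeff q f r * Theta q r (qnode q (Suc m)))"
  using Theta_qnode_neq_0[of m "Suc m"] by (subst newton_coeff.simps) simp

lemma newton_expansion:
  "f k = (\<Sum>n<node_index k. newton_coeff q f n * Theta q n (Q powi k))"
proof -
  obtain m where m: "node_index k = Suc m"
    using node_index_ge_1 by (metis Suc_le_D One_nat_def)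
  then have k: "k = qexp (Suc m)" by (metis qexp_node_index)
  then have "Q powi k = qnode q (Suc m)" by (simp add: qnode_def)
  with m k show ?thesis using newton_coeff_recursion[of m f] by (simp add: mult.commute)
qed

lemma newton_coeff_unique:
  assumes "\<And>k. f k = (\<Sum>n<node_index k. a n * Theta q n (Q powi k))"
  shows "newton_coeff q f m = a m"
proof (induction m rule: less_induct)
  case (less m)
  have "f (qexp (Suc m)) = (\<Sum>n<Suc m. a n * Theta q n (qnode q (Suc m)))"
    using assms[of "qexp (Suc m)"] by (simp add: qnode_def)
  moreover have "Theta q m (qnode q (Suc m)) \<noteq> 0" by (simp add: Theta_qnode_neq_0)
  ultimately show ?case using less by (subst newton_coeff.simps) simp
qed

lemma opA_from_iff_newton_coeff:
  "f \<in> opA_from p q M \<longleftrightarrow> (\<forall>n. plocal p (newton_coeff q f n)) \<and> (\<forall>n<M. newton_coeff q f n = 0)"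
proof
  assume "f \<in> opA_from p q M"
  then obtain a where "\<forall>n. plocal p (a n)" "\<forall>n<M. a n = 0"
    and "\<forall>k. f k = (\<Sum>n<node_index k. a n * Theta q n (Q powi k))"
    unfolding opA_from_def by blast
  then show "(\<forall>n. plocal p (newton_coeff q f n)) \<and> (\<forall>n<M. newton_coeff q f n = 0)"
    using newton_coeff_unique by simp
next
  assume "(\<forall>n. plocal p (newton_coeff q f n)) \<and> (\<forall>n<M. newton_coeff q f n = 0)"
  then show "f \<in> opA_from p q M"
    unfolding opA_from_def using newton_expansion by blast
qed

lemma newton_coeff_linear:
  "newton_coeff q (\<lambda>k. c * f k + d * g k) m = c * newton_coeff q f m + d * newton_coeff q g m"
  by (rule newton_coeff_unique, subst (1 2) newton_expansion)
    (simp add: sum_distrib_left sum.distrib algebra_simps)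

lemma newton_coeff_eq_0:
  assumes "\<And>i. i \<in> {1..n} \<Longrightarrow> f (qexp i) = 0" "m < n"
  shows "newton_coeff q f m = 0"
  using assms(2)
proof (induction m rule: less_induct)
  case (less m)
  then show ?case using assms(1)[of "Suc m"] by (subst newton_coeff.simps) simp
qed

lemma opA_from_linear [intro]:
  assumes "plocal p c" "plocal p d" "f \<in> opA_from p q M" "g \<in> opA_from p q M"
  shows "(\<lambda>k. c * f k + d * g k) \<in> opA_from p q M"
  using assms unfolding opA_from_iff_newton_coeff newton_coeff_linear
  by (auto intro!: plocal_add plocal_mult)

lemma opA_from_add [intro]:
  "f \<in> opA_from p q M \<Longrightarrow> g \<in> opA_from p q M \<Longrightarrow> (\<lambda>k. f k + g k) \<in> opA_from p q M"
  using opA_from_linear[of 1 1 f M g] by simp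

lemma opA_from_scale [intro]:
  "plocal p c \<Longrightarrow> f \<in> opA_from p q M \<Longrightarrow> (\<lambda>k. c * f k) \<in> opA_from p q M"
  using opA_from_linear[of c 0 f M f] by simp

lemma opA_from_diff [intro]:
  "f \<in> opA_from p q M \<Longrightarrow> g \<in> opA_from p q M \<Longrightarrow> (\<lambda>k. f k - g k) \<in> opA_from p q M"
  using opA_from_linear[of 1 "-1" f M g] plocal_of_int[of "-1"] by simp

lemma opA_from_zero [intro]: "(\<lambda>k. 0) \<in> opA_from p q M"
  using opA_from_linear[of 0 0 "\<lambda>k. 0" M "\<lambda>k. 0"]
  unfolding opA_from_iff_newton_coeff newton_coeff_linear[of 0 _ 0, simplified] by simp

lemma opA_from_sum [intro]:
  "finite T \<Longrightarrow> (\<And>t. t \<in> T \<Longrightarrow> F t \<in> opA_from p q M) \<Longrightarrow> (\<lambda>k. \<Sum>t\<in>T. F t k) \<in> opA_from p q M"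
  by (induction T rule: finite_induct) auto

lemma plocal_opA_from: "f \<in> opA_from p q M \<Longrightarrow> plocal p (f k)"
  unfolding opA_from_iff_newton_coeff by (subst newton_expansion) blast

lemma opA_from_if_vanishing:
  assumes "f \<in> opA p q" "\<And>i. i \<in> {1..n} \<Longrightarrow> f (qexp i) = 0"
  shows "f \<in> opA_from p q n"
  using assms newton_coeff_eq_0[of n f] unfolding opA_from_iff_newton_coeff by blast

lemma opA_one: "(\<lambda>k. 1) \<in> opA p q"
  unfolding opA_from_def
proof (intro CollectI exI[of _ "\<lambda>n. if n = 0 then 1 else 0"] conjI allI)
  fix k
  obtain m where m: "node_index k = Suc m"
    using node_index_ge_1 by (metis Suc_le_D One_nat_def)
  show "1 = (\<Sum>n<node_index k. (if n = 0 then 1 else 0) * Theta q n (Q powi k))"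
    unfolding m by (subst sum.lessThan_Suc_shift) simp
qed auto

text \<open>The first \<open>n\<close> Newton coefficients are fixed rational combinations of the first \<open>n\<close> node
  values, so one integer clears all their denominators.\<close>

lemma newton_coeff_common_denominator:
  "\<exists>C::int. C \<noteq> 0 \<and> (\<forall>u. (\<forall>i\<in>{1..n}. plocal p (u (qexp i))) \<longrightarrow>
     (\<forall>r<n. plocal p (of_int C * newton_coeff q u r)))"
proof (induction n)
  case 0
  show ?case by (intro exI[of _ 1]) simp
next
  case (Suc n)
  then obtain C :: int where C: "C \<noteq> 0"
    "\<And>u r. \<forall>i\<in>{1..n}. plocal p (u (qexp i)) \<Longrightarrow> r < n \<Longrightarrow> plocal p (of_int C * newton_coeff q u r)"
    by blast
  define x where "x = qnode q (Suc n)"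
  obtain a b where ab: "\<not> int p dvd b" "b \<noteq> 0" "Theta q n x = of_int a / of_int b"
    using plocal_Theta[OF plocal_qnode[of "Suc n"], of n] unfolding x_def by (elim plocal_fractionE)
  have "a \<noteq> 0" using ab Theta_qnode_neq_0[of n "Suc n"] unfolding x_def by auto
  have "plocal p (of_int (C * a) * newton_coeff q u r)"
    if u: "\<forall>i\<in>{1..Suc n}. plocal p (u (qexp i))" and r: "r < Suc n" for u r
  proof (cases "r < n")
    case True
    with u C(2)[of u r] have "plocal p (of_int a * (of_int C * newton_coeff q u r))" by auto
    then show ?thesis by (simp add: ac_simps)
  next
    case False
    have "of_int (C * a) * newton_coeff q u n = of_int b * (of_int C * (Theta q n x * newton_coeff q u n))"
      using ab(2,3) by (simp add: field_simps)
    also have "\<dots> = of_int b * (of_int C * u (qexp (Suc n))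
        - (\<Sum>r<n. (of_int C * newton_coeff q u r) * Theta q r x))"
      unfolding x_def newton_coeff_recursion by (simp add: sum_distrib_left right_diff_distrib mult.assoc)
    finally have eq: "of_int (C * a) * newton_coeff q u n = of_int b * (of_int C * u (qexp (Suc n))
        - (\<Sum>r<n. (of_int C * newton_coeff q u r) * Theta q r x))" .
    have "plocal p (\<Sum>r<n. (of_int C * newton_coeff q u r) * Theta q r x)"
      unfolding x_def by (rule plocal_sum, rule plocal_mult) (use u C(2)[of u] in auto)
    moreover have "plocal p (u (qexp (Suc n)))" using u by simp
    ultimately have "plocal p (of_int (C * a) * newton_coeff q u n)"
      unfolding eq by (auto intro!: plocal_mult[OF plocal_of_int] plocal_diff)
    moreover have "r = n" using False r by simp
    ultimately show ?thesis by simp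
  qed
  with C(1) \<open>a \<noteq> 0\<close> show ?case by (intro exI[of _ "C * a"]) auto
qed

lemma interpolation_up_to_denominator:
  obtains C :: int where "C \<noteq> 0"
    "\<And>v. \<forall>i\<in>{1..n}. plocal p (v (qexp i)) \<Longrightarrow>
       \<exists>h\<in>opA p q. \<forall>i\<in>{1..n}. h (qexp i) = of_int C * v (qexp i)"
proof -
  obtain C :: int where C: "C \<noteq> 0"
    "\<And>u. \<forall>i\<in>{1..n}. plocal p (u (qexp i)) \<Longrightarrow> \<forall>r<n. plocal p (of_int C * newton_coeff q u r)"
    using newton_coeff_common_denominator by blast
  have "\<exists>h\<in>opA p q. \<forall>i\<in>{1..n}. h (qexp i) = of_int C * v (qexp i)"
    if v: "\<forall>i\<in>{1..n}. plocal p (v (qexp i))" for v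
  proof
    define a where "a r = (if r < n then of_int C * newton_coeff q v r else 0)" for r
    define h where "h k = (\<Sum>r<node_index k. a r * Theta q r (Q powi k))" for k
    have "\<forall>r. plocal p (a r)" using C(2)[OF v] by (simp add: a_def)
    then show "h \<in> opA p q" unfolding opA_from_def h_def by blast
    show "\<forall>i\<in>{1..n}. h (qexp i) = of_int C * v (qexp i)"
    proof
      fix i assume i: "i \<in> {1..n}"
      have "h (qexp i) = (\<Sum>r<i. of_int C * newton_coeff q v r * Theta q r (qnode q i))"
        unfolding h_def using i by (intro sum.cong) (auto simp: a_def qnode_def)
      also have "\<dots> = of_int C * v (qexp i)"
        by (subst (2) newton_expansion) (use i in \<open>simp add: qnode_def sum_distrib_left mult.assoc\<close>)
      finally show "h (qexp i) = of_int C * v (qexp i)" .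
    qed
  qed
  with C(1) that show thesis by blast
qed

lemma interpolation_up_to_prime_power:
  obtains M where
    "\<And>m v. \<forall>i\<in>{1..n}. plocal p (v (qexp i) / of_nat p ^ (m + M)) \<Longrightarrow>
       \<exists>h\<in>opA p q. \<forall>i\<in>{1..n}. v (qexp i) = of_nat p ^ m * h (qexp i)"
proof -
  obtain C :: int where C: "C \<noteq> 0"
    "\<And>v. \<forall>i\<in>{1..n}. plocal p (v (qexp i)) \<Longrightarrow>
       \<exists>h\<in>opA p q. \<forall>i\<in>{1..n}. h (qexp i) = of_int C * v (qexp i)"
    using interpolation_up_to_denominator[of n] by blast
  define M where "M = multiplicity (int p) C"
  have p0: "(of_nat p :: rat) \<noteq> 0" using prime_p by auto
  have "\<exists>h\<in>opA p q. \<forall>i\<in>{1..n}. v (qexp i) = of_nat p ^ m * h (qexp i)"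
    if v: "\<forall>i\<in>{1..n}. plocal p (v (qexp i) / of_nat p ^ (m + M))" for m v
  proof -
    define w where "w k = v k / (of_nat p ^ m * of_int C)" for k
    have pM: "plocal p (of_nat p ^ M / of_int C)"
      using plocal_prime_power_div[OF C(1), of M] by (simp add: M_def)
    have "\<forall>i\<in>{1..n}. plocal p (w (qexp i))"
    proof (intro ballI)
      fix i assume i: "i \<in> {1..n}"
      have w: "w (qexp i) = v (qexp i) / of_nat p ^ (m + M) * (of_nat p ^ M / of_int C)"
        unfolding w_def using p0 C(1) by (simp add: power_add field_simps)
      show "plocal p (w (qexp i))" unfolding w by (intro plocal_mult) (use v i pM in auto)
    qed
    then obtain h where h: "h \<in> opA p q" "\<forall>i\<in>{1..n}. h (qexp i) = of_int C * w (qexp i)"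
      using C(2)[of w] by blast
    have "v (qexp i) = of_nat p ^ m * h (qexp i)" if "i \<in> {1..n}" for i
      using h(2) that p0 C(1) unfolding w_def by simp
    with h(1) show ?thesis by blast
  qed
  with that show thesis by blast
qed

text \<open>Multiplication by \<open>\<Psi>\<^sup>q\<close> shifts the basis: \<open>X \<Theta>\<^sub>n(X) = \<Theta>\<^sub>n\<^sub>+\<^sub>1(X) + q\<^sub>n\<^sub>+\<^sub>1 \<Theta>\<^sub>n(X)\<close>.\<close>

lemma opA_mult_Q_powi:
  assumes "f \<in> opA p q"
  shows "(\<lambda>k. Q powi k * f k) \<in> opA p q"
proof -
  define a where "a = newton_coeff q f"
  define b where "b m = (if m = 0 then 0 else a (m - 1)) + a m * qnode q (Suc m)" for m
  have "plocal p (b m)" for m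
    using assms unfolding b_def a_def opA_from_iff_newton_coeff by auto
  moreover have "Q powi k * f k = (\<Sum>m<node_index k. b m * Theta q m (Q powi k))" for k
  proof -
    obtain i where i: "node_index k = Suc i" using node_index_ge_1 by (metis Suc_le_D One_nat_def)
    define X where "X = Q powi k"
    have XT: "X * Theta q n X = Theta q (Suc n) X + qnode q (Suc n) * Theta q n X" for n
      by (simp add: Theta_Suc algebra_simps)
    have "Q powi k * f k = (\<Sum>n<Suc i. a n * (X * Theta q n X))"
      by (subst newton_expansion) (simp add: i X_def a_def sum_distrib_left algebra_simps)
    also have "\<dots> = (\<Sum>n<Suc i. a n * Theta q (Suc n) X) + (\<Sum>n<Suc i. a n * qnode q (Suc n) * Theta q n X)"
      unfolding XT by (simp add: sum.distrib algebra_simps)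
    also have "(\<Sum>n<Suc i. a n * Theta q (Suc n) X) = (\<Sum>n<i. a n * Theta q (Suc n) X)"
      using Theta_eq_0[of k "Suc i"] i by (simp add: X_def)
    also have "\<dots> = (\<Sum>m<Suc i. (if m = 0 then 0 else a (m - 1)) * Theta q m X)"
      by (subst sum.lessThan_Suc_shift) simp
    finally show ?thesis unfolding b_def X_def i by (simp add: sum.distrib algebra_simps)
  qed
  ultimately show ?thesis unfolding opA_from_def by blast
qed

lemma adams_Q_power_in_opA: "adams (Q ^ s) \<in> opA p q"
proof (induction s)
  case 0
  then show ?case using opA_one by (simp add: adams_def)
next
  case (Suc s)
  have "adams (Q ^ Suc s) = (\<lambda>k. Q powi k * adams (Q ^ s) k)"
    unfolding adams_def by (auto simp: power_int_mult_distrib)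
  then show ?case using opA_mult_Q_powi[OF Suc] by simp
qed

lemma newton_coeff_cong_nodes:
  assumes "\<And>i. i \<in> {1..Suc m} \<Longrightarrow> f (qexp i) = g (qexp i)"
  shows "newton_coeff q f m = newton_coeff q g m"
  using assms
proof (induction m rule: less_induct)
  case (less m)
  then have "newton_coeff q f r = newton_coeff q g r" if "r < m" for r
    using that by (intro less.IH) auto
  with less.prems show ?case by (subst (1 2) newton_coeff.simps) simp
qed

lemma opA_if_interpolated:
  assumes "\<And>N. \<exists>g\<in>opA p q. \<forall>i\<in>{1..N}. f (qexp i) = g (qexp i)"
  shows "f \<in> opA p q"
  unfolding opA_from_iff_newton_coeff
proof (intro conjI allI impI)
  fix n
  obtain g where "g \<in> opA p q" "\<forall>i\<in>{1..Suc n}. f (qexp i) = g (qexp i)"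
    using assms by blast
  then show "plocal p (newton_coeff q f n)"
    using newton_coeff_cong_nodes[of n f g] unfolding opA_from_iff_newton_coeff by simp
qed simp

lemma Theta_polynomial:
  "\<exists>c. (\<forall>t. plocal p (c t)) \<and> (\<forall>t>r. c t = 0) \<and> (\<forall>X. Theta q r X = (\<Sum>t\<le>r. c t * X ^ t))"
proof (induction r)
  case 0
  show ?case by (intro exI[of _ "\<lambda>t. if t = 0 then 1 else 0"]) auto
next
  case (Suc r)
  then obtain c where c: "\<And>t. plocal p (c t)" "\<And>t. t > r \<Longrightarrow> c t = 0"
    "\<And>X. Theta q r X = (\<Sum>t\<le>r. c t * X ^ t)" by blast
  define x where "x = qnode q (Suc r)"
  define c' where "c' t = (if t = 0 then 0 else c (t - 1)) - x * c t" for t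
  have "plocal p (c' t)" for t
    unfolding c'_def x_def using c(1) by (intro plocal_diff plocal_mult plocal_qnode) auto
  moreover have "c' t = 0" if "t > Suc r" for t unfolding c'_def using that c(2) by auto
  moreover have "Theta q (Suc r) X = (\<Sum>t\<le>Suc r. c' t * X ^ t)" for X
  proof -
    have shift: "(\<Sum>t\<le>Suc r. (if t = 0 then 0 else c (t - 1)) * X ^ t) = (\<Sum>t\<le>r. c t * X ^ t) * X"
      by (subst sum.atMost_Suc_shift) (simp add: sum_distrib_right sum_distrib_left algebra_simps)
    have "(\<Sum>t\<le>Suc r. c' t * X ^ t)
        = (\<Sum>t\<le>Suc r. (if t = 0 then 0 else c (t - 1)) * X ^ t) - x * (\<Sum>t\<le>Suc r. c t * X ^ t)"
      unfolding c'_def by (simp add: sum_subtractf sum_distrib_left algebra_simps)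
    also have "\<dots> = Theta q r X * (X - x)"
      unfolding shift c(3) using c(2)[of "Suc r"] by (simp add: algebra_simps)
    finally show ?thesis unfolding Theta_Suc x_def by simp
  qed
  ultimately show ?case by blast
qed

lemma opA_adams_combination_at_nodes:
  assumes g: "g \<in> opA p q"
  obtains b where "\<And>t. plocal p (b t)"
    "\<And>i. i \<in> {1..n} \<Longrightarrow> g (qexp i) = (\<Sum>t<n. b t * adams (Q ^ t) (qexp i))"
proof -
  obtain c where c: "\<And>r t. plocal p (c r t)" "\<And>r t. t > r \<Longrightarrow> c r t = 0"
    "\<And>r X. Theta q r X = (\<Sum>t\<le>r. c r t * X ^ t)"
    using Theta_polynomial by metis
  have Theta_n: "Theta q r X = (\<Sum>t<n. c r t * X ^ t)" if "r < n" for r X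
    unfolding c(3) using that c(2) by (intro sum.mono_neutral_left) auto
  define a where "a = newton_coeff q g"
  define b where "b t = (\<Sum>r<n. a r * c r t)" for t
  have "plocal p (a r)" for r using g unfolding opA_from_iff_newton_coeff a_def by simp
  then have "plocal p (b t)" for t unfolding b_def using c(1) by blast
  moreover have "g (qexp i) = (\<Sum>t<n. b t * adams (Q ^ t) (qexp i))" if i: "i \<in> {1..n}" for i
  proof -
    have "g (qexp i) = (\<Sum>r<i. a r * Theta q r (qnode q i))"
      unfolding a_def using i by (subst newton_expansion) (simp add: qnode_def)
    also have "\<dots> = (\<Sum>r<n. a r * Theta q r (qnode q i))"
      using i Theta_qnode_eq_0 by (intro sum.mono_neutral_left) auto
    also have "\<dots> = (\<Sum>r<n. \<Sum>t<n. a r * c r t * qnode q i ^ t)"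
      by (intro sum.cong refl) (simp add: Theta_n sum_distrib_left mult.assoc)
    also have "\<dots> = (\<Sum>t<n. b t * qnode q i ^ t)"
      unfolding b_def by (subst sum.swap) (simp add: sum_distrib_right)
    also have "\<dots> = (\<Sum>t<n. b t * adams (Q ^ t) (qexp i))"
      unfolding qnode_def adams_def by (simp add: power_int_power power_int_power' mult.commute)
    finally show ?thesis .
  qed
  ultimately show thesis using that by blast
qed

lemma opA_mult:
  assumes f: "f \<in> opA p q" and g: "g \<in> opA p q"
  shows "(\<lambda>k. f k * g k) \<in> opA p q"
proof (rule opA_if_interpolated)
  fix N
  obtain b where b: "\<And>t. plocal p (b t)"
    "\<And>i. i \<in> {1..N} \<Longrightarrow> f (qexp i) = (\<Sum>t<N. b t * adams (Q ^ t) (qexp i))"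
    using opA_adams_combination_at_nodes[OF f] by blast
  obtain c where c: "\<And>s. plocal p (c s)"
    "\<And>i. i \<in> {1..N} \<Longrightarrow> g (qexp i) = (\<Sum>s<N. c s * adams (Q ^ s) (qexp i))"
    using opA_adams_combination_at_nodes[OF g] by blast
  define h where "h k = (\<Sum>t<N. \<Sum>s<N. b t * c s * adams (Q ^ (t + s)) k)" for k
  have "h \<in> opA p q"
    unfolding h_def using b(1) c(1)
    by (intro opA_from_sum opA_from_scale adams_Q_power_in_opA plocal_mult) auto
  moreover have "f (qexp i) * g (qexp i) = h (qexp i)" if "i \<in> {1..N}" for i
    unfolding b(2)[OF that] c(2)[OF that] h_def sum_product adams_def
    by (simp add: power_add power_int_mult_distrib algebra_simps)
  ultimately show "\<exists>h\<in>opA p q. \<forall>i\<in>{1..N}. f (qexp i) * g (qexp i) = h (qexp i)" by blast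
qed

end

section \<open>Adams operations in \<open>A\<close>\<close>

lemma cong_one_imp_power_prime_cong_one:
  fixes x :: int
  assumes "prime p" "[x = 1] (mod int p)"
  shows "[x ^ p = 1] (mod int p ^ 2)"
proof -
  have "[(\<Sum>i<p. x ^ i) = (\<Sum>i<p. 1)] (mod int p)"
    by (rule cong_sum) (metis assms(2) cong_pow power_one)
  then have "int p dvd (\<Sum>i<p. x ^ i)" using cong_dvd_iff by fastforce
  moreover have "int p dvd x - 1" using assms(2) cong_iff_dvd_diff by blast
  ultimately have "int p * int p dvd (x - 1) * (\<Sum>i<p. x ^ i)" by (simp add: mult_dvd_mono)
  then show ?thesis by (simp add: cong_iff_dvd_diff power_diff_1_eq power2_eq_square)
qed

lemma residue_primroot_prime_square_imp_prime:
  assumes p: "prime p" and g: "residue_primroot (p ^ 2) g"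
  shows "residue_primroot p g"
proof -
  have p1: "p > 1" using p prime_gt_1_nat by blast
  have cop: "coprime p g" using g by (simp add: residue_primroot_def)
  define d where "d = ord p g"
  have "[g ^ d = 1] (mod p)" unfolding d_def using ord_works by blast
  then have "[int g ^ d = 1] (mod int p)" by (metis cong_int_iff of_nat_1 of_nat_power)
  then have "[int g ^ (d * p) = 1] (mod int p ^ 2)"
    using cong_one_imp_power_prime_cong_one[OF p] by (simp add: power_mult)
  then have "ord (p ^ 2) g dvd d * p"
    using ord_divides by (metis cong_int_iff of_nat_1 of_nat_power)
  moreover have "ord (p ^ 2) g = p * (p - 1)"
    using g totient_prime_power_Suc[OF p, of 1] by (simp add: residue_primroot_def numeral_2_eq_2)
  ultimately have "p - 1 dvd d" using p1 by (simp add: mult.commute)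
  moreover have "\<not> p dvd g"
    using coprime_common_divisor_nat[OF cop dvd_refl] p1 by auto
  then have "d dvd p - 1"
    unfolding d_def using fermat_theorem[OF p] ord_divides by blast
  ultimately have "d = p - 1" by (simp add: dvd_antisym)
  then show ?thesis using p1 cop p by (simp add: residue_primroot_def d_def totient_prime)
qed

lemma residue_primroot_prime_square_lift:
  assumes p: "prime p" "odd p" and g: "residue_primroot (p ^ 2) g" and k: "k > 0"
  shows "residue_primroot (p ^ k) g"
proof -
  have p1: "p > 1" using p prime_gt_1_nat by blast
  have ord2: "ord (p ^ 2) g = p * (p - 1)"
    using g totient_prime_power_Suc[OF p(1), of 1] by (simp add: residue_primroot_def numeral_2_eq_2)
  have "[g ^ (p - 1) \<noteq> 1] (mod p\<^sup>2)"
  proof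
    assume "[g ^ (p - 1) = 1] (mod p\<^sup>2)"
    then have "p * (p - 1) dvd p - 1" using ord2 ord_divides by metis
    then have "p * (p - 1) \<le> p - 1" using p1 by (intro dvd_imp_le) auto
    then show False using p1 by simp
  qed
  then show ?thesis
    using residue_primroot_prime_lift_iff[OF p residue_primroot_prime_square_imp_prime[OF p(1) g]] k
    by blast
qed

lemma primitive_mod_p2_residue_primroot:
  assumes p: "prime p" "odd p" and q: "primitive_mod_p2 p q" and k: "k \<ge> 2"
  shows "residue_primroot (p ^ k) (nat (q mod int (p ^ k)))"
proof -
  have "int (p ^ 2) dvd int (p ^ k)" using k by (simp add: le_imp_power_dvd)
  then have "[q mod int (p ^ k) = q mod int (p ^ 2)] (mod int (p ^ 2))"
    by (metis cong_dvd_modulus cong_mod_left cong_mod_right cong_refl)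
  moreover have "q mod int (p ^ k) \<ge> 0" "q mod int (p ^ 2) \<ge> 0"
    using prime_gt_0_nat[OF p(1)] by simp_all
  ultimately have "[nat (q mod int (p ^ k)) = nat (q mod int (p ^ 2))] (mod p ^ 2)"
    by (metis cong_int_iff int_nat_eq)
  then have "residue_primroot (p ^ 2) (nat (q mod int (p ^ k)))"
    using q residue_primroot_cong unfolding primitive_mod_p2_def by blast
  then show ?thesis using residue_primroot_prime_square_lift[OF p] k by simp
qed

lemma primitive_mod_p2_power_cong:
  assumes p: "prime p" "odd p" and q: "primitive_mod_p2 p q" and k: "k \<ge> 2"
    and c: "\<not> int p dvd c"
  obtains i where "[q ^ i = c] (mod int (p ^ k))"
proof -
  define m where "m = p ^ k"
  define g where "g = nat (q mod int m)"
  have m1: "m > 1" unfolding m_def using k prime_gt_1_nat[OF p(1)] by (intro one_less_power) auto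
  have "coprime c (int p)"
    using c prime_imp_coprime[of "int p" c] p(1) by (simp add: coprime_commute)
  then have "coprime c (int m)" unfolding m_def by simp
  then have cop: "coprime (c mod int m) (int m)" using m1 by simp
  define r where "r = nat (c mod int m)"
  have r: "int r = c mod int m" unfolding r_def using m1 by simp
  have "r \<noteq> 0"
  proof
    assume "r = 0"
    with r cop have "is_unit (int m)" by simp
    with m1 show False by simp
  qed
  moreover have "int r < int m" using r m1 by simp
  then have "r \<le> m" by simp
  moreover have "coprime r m" using r cop by (metis coprime_int_iff)
  ultimately have "r \<in> totatives m" by (simp add: in_totatives_iff)
  moreover have "(\<lambda>i. g ^ i mod m) ` {..<totient m} = totatives m"
    using residue_primroot_is_generator[OF m1] primitive_mod_p2_residue_primroot[OF p q k]
    unfolding bij_betw_def g_def m_def by blast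
  ultimately obtain i where "r = g ^ i mod m" by blast
  then have "int g ^ i mod int m = c mod int m"
    using r by (metis of_nat_mod of_nat_power)
  then have gc: "[int g ^ i = c] (mod int m)" by (simp add: cong_def)
  have "[int g = q] (mod int m)" unfolding g_def cong_def using m1 by simp
  then have "[int g ^ i = q ^ i] (mod int m)" by (rule cong_pow)
  then have "[q ^ i = c] (mod int m)" using gc by (metis cong_sym cong_trans)
  with that show thesis unfolding m_def by blast
qed

lemma primitive_mod_p2_coprime:
  assumes "prime p" "primitive_mod_p2 p q"
  shows "\<not> int p dvd q"
proof
  assume "int p dvd q"
  then have "int p dvd q mod int (p ^ 2)" by (simp add: dvd_mod)
  moreover have "int (nat (q mod int (p ^ 2))) = q mod int (p ^ 2)"
    using prime_gt_0_nat[OF assms(1)] by simp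
  ultimately have "p dvd nat (q mod int (p ^ 2))"
    by (subst int_dvd_int_iff[symmetric]) simp
  moreover have "coprime p (nat (q mod int (p ^ 2)))"
    using assms(2) unfolding primitive_mod_p2_def residue_primroot_def by simp
  ultimately have "p = 1" using coprime_common_divisor_nat[OF _ dvd_refl] by blast
  with assms(1) show False by simp
qed

lemma primitive_mod_p2_abs_gt_1:
  assumes p: "prime p" "odd p" and q: "primitive_mod_p2 p q"
  shows "\<bar>q\<bar> > 1"
proof (rule ccontr)
  define g where "g = nat (q mod int (p ^ 2))"
  assume "\<not> \<bar>q\<bar> > 1"
  moreover have "q \<noteq> 0" using primitive_mod_p2_coprime[OF p(1) q] by auto
  ultimately have "q = 1 \<or> q = -1" by arith
  then have "q ^ 2 = 1" by auto
  moreover have "[int g = q] (mod int (p ^ 2))"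
    unfolding g_def cong_def using prime_gt_0_nat[OF p(1)] by simp
  ultimately have "[int g ^ 2 = 1] (mod int (p ^ 2))" by (metis cong_pow)
  then have "ord (p ^ 2) g dvd 2" by (metis cong_int_iff ord_divides of_nat_1 of_nat_power)
  moreover have "ord (p ^ 2) g = p * (p - 1)"
    using q totient_prime_power_Suc[OF p(1), of 1]
    by (simp add: primitive_mod_p2_def residue_primroot_def g_def numeral_2_eq_2)
  ultimately have "p * (p - 1) \<le> 2" by (simp add: dvd_imp_le)
  moreover have "p \<ge> 3" using p prime_ge_2_nat[of p] by presburger
  then have "3 * 2 \<le> p * (p - 1)" by (intro mult_mono) auto
  ultimately show False by simp
qed

locale primitive_adams = p_local +
  fixes q :: int
  assumes odd_p: "odd p" and primitive: "primitive_mod_p2 p q"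

sublocale primitive_adams \<subseteq> adams_nodes
  using primitive_mod_p2_coprime primitive_mod_p2_abs_gt_1 prime_p odd_p primitive
  by unfold_locales auto

context primitive_adams
begin

lemma plocal_unit_approximation:
  assumes "plocal_unit p j"
  obtains s :: nat where "plocal p ((j - Q ^ s) / of_nat p ^ K)"
proof -
  obtain a b where ab: "\<not> int p dvd a" "\<not> int p dvd b" "j = of_int a / of_int b"
    using plocal_unit_fraction[OF assms] .
  define m where "m = int (p ^ (K + 2))" \<comment> \<open>primitivity is only available modulo \<open>p\<^sup>k\<close>, \<open>k \<ge> 2\<close>\<close>
  have "coprime b m"
    using ab(2) prime_imp_coprime[OF prime_int_p] unfolding m_def by (simp add: coprime_commute)
  then obtain b' where b': "[b * b' = 1] (mod m)" using cong_solve_coprime_int by blast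
  have "\<not> int p dvd a * b'"
  proof
    assume "int p dvd a * b'"
    moreover have "int p dvd m" unfolding m_def by simp
    ultimately have "int p dvd a * (b * b')" using b' cong_dvd_iff cong_dvd_modulus
      by (metis dvd_mult mult.left_commute)
    with b' \<open>int p dvd m\<close> have "int p dvd a"
      by (metis cong_dvd_modulus cong_scalar_left cong_dvd_iff mult.right_neutral)
    with ab(1) show False ..
  qed
  then obtain i where "[q ^ i = a * b'] (mod m)"
    using primitive_mod_p2_power_cong[OF prime_p odd_p primitive, of "K + 2"] unfolding m_def by auto
  then have "[q ^ i * b = a * (b * b')] (mod m)" by (metis cong_mult_self_right cong_scalar_right mult.commute mult.left_commute)
  also have "[a * (b * b') = a] (mod m)" using cong_scalar_left[OF b', of a] by simp
  finally have "m dvd a - q ^ i * b" by (simp add: cong_iff_dvd_diff dvd_diff_commute)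
  then obtain t where t: "a - q ^ i * b = m * t" by (elim dvdE)
  have b0: "b \<noteq> 0" using ab(2) by auto
  have "(j - Q ^ i) / of_nat p ^ K = of_int (int p ^ 2 * t) / of_int b"
  proof -
    have "j - Q ^ i = of_int (a - q ^ i * b) / of_int b"
      using ab(3) b0 by (simp add: field_simps)
    moreover have "(of_int m :: rat) = of_nat p ^ K * of_nat p ^ 2"
      unfolding m_def by (simp add: power_add power2_eq_square)
    moreover have "(of_nat p :: rat) ^ K \<noteq> 0" using prime_p by simp
    ultimately show ?thesis unfolding t by (simp add: field_simps)
  qed
  with plocal_fractionI[OF ab(2)] that show thesis by metis
qed

lemma adams_in_opA:
  assumes j: "plocal_unit p j"
  shows "adams j \<in> opA p q"
proof (rule opA_if_interpolated)
  fix N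
  obtain M where M: "\<And>m v. \<forall>i\<in>{1..N}. plocal p (v (qexp i) / of_nat p ^ (m + M)) \<Longrightarrow>
       \<exists>h\<in>opA p q. \<forall>i\<in>{1..N}. v (qexp i) = of_nat p ^ m * h (qexp i)"
    using interpolation_up_to_prime_power by blast
  obtain s where s: "plocal p ((j - Q ^ s) / of_nat p ^ M)"
    using plocal_unit_approximation[OF j] .
  define v where "v k = adams j k - adams (Q ^ s) k" for k
  have "plocal p (v k / of_nat p ^ M)" for k
  proof -
    obtain d where d: "plocal p d" "j powi k - (Q ^ s) powi k = (j - Q ^ s) * d"
      using plocal_powi_diff_factor[OF j plocal_unit_powi_unit[OF Q_unit, of "int s"]] by auto
    then have "v k = (j - Q ^ s) * d" unfolding v_def adams_def by simp
    then have "v k / of_nat p ^ M = (j - Q ^ s) / of_nat p ^ M * d" by simp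
    then show ?thesis using plocal_mult[OF s d(1)] by (simp only:)
  qed
  then have "\<forall>i\<in>{1..N}. plocal p (v (qexp i) / of_nat p ^ (0 + M))" by simp
  then obtain h where h: "h \<in> opA p q" "\<forall>i\<in>{1..N}. v (qexp i) = of_nat p ^ 0 * h (qexp i)"
    using M by blast
  have "\<forall>i\<in>{1..N}. adams j (qexp i) = adams (Q ^ s) (qexp i) + h (qexp i)"
    using h(2) unfolding v_def by (simp add: algebra_simps)
  moreover have "(\<lambda>k. adams (Q ^ s) k + h k) \<in> opA p q"
    using adams_Q_power_in_opA h(1) by (rule opA_from_add)
  ultimately show "\<exists>g\<in>opA p q. \<forall>i\<in>{1..N}. adams j (qexp i) = g (qexp i)" by (rule bexI)
qed

end

section \<open>Discrete \<open>A\<close>-modules\<close>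

definition Acyc :: "nat \<Rightarrow> int \<Rightarrow> ((int \<Rightarrow> rat) \<Rightarrow> 'm::ab_group_add \<Rightarrow> 'm) \<Rightarrow> 'm \<Rightarrow> 'm set" where
  "Acyc p q act x = {act f x | f. f \<in> opA p q}"

locale A_module = adams_nodes +
  fixes act :: "(int \<Rightarrow> rat) \<Rightarrow> 'm::ab_group_add \<Rightarrow> 'm"
  assumes A_module: "is_A_module p q act"
begin

lemma act_add: "a \<in> opA p q \<Longrightarrow> b \<in> opA p q \<Longrightarrow> act (\<lambda>k. a k + b k) y = act a y + act b y"
  and act_mult: "a \<in> opA p q \<Longrightarrow> b \<in> opA p q \<Longrightarrow> act (\<lambda>k. a k * b k) y = act a (act b y)"
  and act_one: "act (\<lambda>k. 1) y = y"
  using A_module unfolding is_A_module_def by blast+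

lemma act_zero: "act (\<lambda>k. 0) y = 0"
  using act_add[OF opA_from_zero opA_from_zero, of y] by simp

lemma act_diff: "a \<in> opA p q \<Longrightarrow> b \<in> opA p q \<Longrightarrow> act (\<lambda>k. a k - b k) y = act a y - act b y"
  using act_add[of b "\<lambda>k. a k - b k" y] by (simp add: algebra_simps opA_from_diff)

lemma act_sum:
  "finite T \<Longrightarrow> (\<And>t. t \<in> T \<Longrightarrow> F t \<in> opA p q) \<Longrightarrow>
     act (\<lambda>k. \<Sum>t\<in>T. F t k) y = (\<Sum>t\<in>T. act (F t) y)"
proof (induction T rule: finite_induct)
  case empty
  then show ?case using act_zero by simp
next
  case (insert t T)
  then show ?case using act_add[of "F t" "\<lambda>k. \<Sum>t\<in>T. F t k" y] by (simp add: opA_from_sum)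
qed

lemma scal_in_opA: "plocal p c \<Longrightarrow> scal c \<in> opA p q"
  unfolding scal_def using opA_from_scale[OF _ opA_one, of c] by simp

lemma act_scal_act: "plocal p c \<Longrightarrow> f \<in> opA p q \<Longrightarrow> act (scal c) (act f y) = act (\<lambda>k. c * f k) y"
  using act_mult[OF scal_in_opA] unfolding scal_def by simp

lemma act_scal_sum:
  "finite T \<Longrightarrow> (\<And>t. t \<in> T \<Longrightarrow> plocal p (c t)) \<Longrightarrow>
     act (scal (\<Sum>t\<in>T. c t)) y = (\<Sum>t\<in>T. act (scal (c t)) y)"
  using act_sum[of T "\<lambda>t. scal (c t)" y] scal_in_opA unfolding scal_def by simp

lemma sum_act_scal_regroup:
  assumes "finite T" "\<And>t. t \<in> T \<Longrightarrow> plocal p (b t)"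
  shows "(\<Sum>t\<in>T. act (scal (b t)) (\<phi> (u t)))
    = (\<Sum>j\<in>u ` T. act (scal (\<Sum>t\<in>{t\<in>T. u t = j}. b t)) (\<phi> j))"
proof -
  have "(\<Sum>t\<in>T. act (scal (b t)) (\<phi> (u t)))
      = (\<Sum>j\<in>u ` T. \<Sum>t\<in>{t\<in>T. u t = j}. act (scal (b t)) (\<phi> (u t)))"
    using assms(1) by (rule sum.image_gen)
  also have "\<dots> = (\<Sum>j\<in>u ` T. act (scal (\<Sum>t\<in>{t\<in>T. u t = j}. b t)) (\<phi> j))"
    using assms by (intro sum.cong refl, subst act_scal_sum) auto
  finally show ?thesis .
qed

lemma Acyc_add: "y \<in> Acyc p q act x \<Longrightarrow> y' \<in> Acyc p q act x \<Longrightarrow> y + y' \<in> Acyc p q act x"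
  unfolding Acyc_def by (auto simp flip: act_add intro!: opA_from_add)

lemma Acyc_sum:
  "finite T \<Longrightarrow> (\<And>t. t \<in> T \<Longrightarrow> h t \<in> Acyc p q act x) \<Longrightarrow> sum h T \<in> Acyc p q act x"
proof (induction T rule: finite_induct)
  case empty
  have "act (\<lambda>k. 0) x \<in> Acyc p q act x" unfolding Acyc_def by blast
  then show ?case by (simp add: act_zero)
qed (simp add: Acyc_add)

lemma Acyc_scal: "plocal p c \<Longrightarrow> y \<in> Acyc p q act x \<Longrightarrow> act (scal c) y \<in> Acyc p q act x"
  unfolding Acyc_def by (auto simp: act_scal_act intro!: opA_from_scale)

end

locale annihilated_element = primitive_adams + A_module +
  fixes x :: "'m::ab_group_add" and n :: nat
  assumes annihilated: "\<And>a. a \<in> opA_from p q n \<Longrightarrow> act a x = 0"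
begin

lemma act_cong_nodes:
  assumes "f \<in> opA p q" "g \<in> opA p q" "\<And>i. i \<in> {1..n} \<Longrightarrow> f (qexp i) = g (qexp i)"
  shows "act f x = act g x"
proof -
  have "(\<lambda>k. f k - g k) \<in> opA_from p q n"
    by (rule opA_from_if_vanishing) (use assms in auto)
  then show ?thesis using act_diff[OF assms(1,2), of x] annihilated by simp
qed

lemma act_adams_combination:
  assumes "f \<in> opA p q"
  obtains b where "\<And>t. plocal p (b t)"
    "act f x = (\<Sum>t<n. act (scal (b t)) (act (adams (Q ^ t)) x))"
proof -
  obtain b where b: "\<And>t. plocal p (b t)"
    "\<And>i. i \<in> {1..n} \<Longrightarrow> f (qexp i) = (\<Sum>t<n. b t * adams (Q ^ t) (qexp i))"
    using opA_adams_combination_at_nodes[OF assms] by blast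
  have "act f x = act (\<lambda>k. \<Sum>t<n. b t * adams (Q ^ t) k) x"
    using assms b by (intro act_cong_nodes opA_from_sum opA_from_scale adams_Q_power_in_opA) auto
  also have "\<dots> = (\<Sum>t<n. act (scal (b t)) (act (adams (Q ^ t)) x))"
    using b(1) by (simp add: act_sum act_scal_act opA_from_scale adams_Q_power_in_opA)
  finally show thesis using that b(1) by blast
qed

lemma Rcyc_eq_Acyc: "Rcyc p act x = Acyc p q act x"
proof
  show "Rcyc p act x \<subseteq> Acyc p q act x"
  proof
    fix y assume "y \<in> Rcyc p act x"
    then obtain J c where y: "y = (\<Sum>j\<in>J. act (scal (c j)) (act (adams j) x))" and "finite J"
      and "\<forall>j\<in>J. plocal_unit p j" "\<forall>j\<in>J. plocal p (c j)"
      unfolding Rcyc_def by blast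
    then show "y \<in> Acyc p q act x"
      unfolding y by (intro Acyc_sum Acyc_scal) (auto simp: Acyc_def intro: adams_in_opA)
  qed
next
  show "Acyc p q act x \<subseteq> Rcyc p act x"
  proof
    fix y assume "y \<in> Acyc p q act x"
    then obtain b where b: "\<And>t. plocal p (b t)"
      "y = (\<Sum>t<n. act (scal (b t)) (act (adams (Q ^ t)) x))"
      unfolding Acyc_def using act_adams_combination by blast
    define c where "c j = (\<Sum>t\<in>{t\<in>{..<n}. Q ^ t = j}. b t)" for j
    have "y = (\<Sum>j\<in>(\<lambda>t. Q ^ t) ` {..<n}. act (scal (c j)) (act (adams j) x))"
      unfolding b(2) c_def using b(1)
      by (intro sum_act_scal_regroup[where \<phi> = "\<lambda>j. act (adams j) x"]) auto
    moreover have "plocal_unit p (Q ^ t)" for t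
      using plocal_unit_powi_unit[OF Q_unit, of "int t"] by simp
    moreover have "plocal p (c j)" for j unfolding c_def using b(1) by blast
    ultimately show "y \<in> Rcyc p act x" unfolding Rcyc_def by blast
  qed
qed

lemma Rcyc_finitely_generated:
  "\<exists>G. finite G \<and> G \<subseteq> Rcyc p act x \<and> Rcyc p act x = zp_span p act G"
proof -
  define u where "u t = act (adams (Q ^ t)) x" for t
  define G where "G = u ` {..<n}"
  have G: "G \<subseteq> Acyc p q act x"
    unfolding G_def u_def Acyc_def using adams_Q_power_in_opA by blast
  have "y \<in> zp_span p act G" if "y \<in> Acyc p q act x" for y
  proof -
    obtain b where b: "\<And>t. plocal p (b t)" "y = (\<Sum>t<n. act (scal (b t)) (u t))"
      using \<open>y \<in> Acyc p q act x\<close> unfolding Acyc_def u_def using act_adams_combination by blast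
    define c where "c g = (\<Sum>t\<in>{t\<in>{..<n}. u t = g}. b t)" for g
    have "y = (\<Sum>g\<in>G. act (scal (c g)) g)"
      unfolding b(2) c_def G_def using b(1)
      by (intro sum_act_scal_regroup[where \<phi> = "\<lambda>g. g"]) auto
    moreover have "\<forall>g\<in>G. plocal p (c g)" unfolding c_def using b(1) by blast
    ultimately show ?thesis unfolding zp_span_def by blast
  qed
  moreover have "zp_span p act G \<subseteq> Acyc p q act x"
    unfolding zp_span_def using G G_def by (auto intro!: Acyc_sum Acyc_scal)
  ultimately show ?thesis unfolding Rcyc_eq_Acyc using G G_def by blast
qed


lemma act_adams_node_supported:
  assumes h: "h \<in> opA p q" and j: "plocal_unit p j" and i: "i \<in> {1..n}"
    and supp: "\<And>l. l \<in> {1..n} \<Longrightarrow> l \<noteq> i \<Longrightarrow> h (qexp l) = 0"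
  shows "act (adams j) (act h x) = act (scal (j powi qexp i)) (act h x)"
proof -
  have "act (adams j) (act h x) = act (\<lambda>k. adams j k * h k) x"
    using act_mult[OF adams_in_opA[OF j] h] by simp
  also have "\<dots> = act (\<lambda>k. j powi qexp i * h k) x"
  proof (rule act_cong_nodes)
    show "(\<lambda>k. adams j k * h k) \<in> opA p q" using adams_in_opA[OF j] h by (rule opA_mult)
    show "(\<lambda>k. j powi qexp i * h k) \<in> opA p q" using j h by (intro opA_from_scale) auto
  qed (use supp in \<open>auto simp: adams_def\<close>)
  also have "\<dots> = act (scal (j powi qexp i)) (act h x)"
    using act_scal_act[OF plocal_unit_powi[OF j] h] by simp
  finally show ?thesis .
qed

lemma act_node_decomposition:
  assumes f: "f \<in> opA p q"
  obtains C :: int and H where "C \<noteq> 0" "\<forall>i\<in>{1..n}. H i \<in> opA p q"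
    "\<forall>i\<in>{1..n}. \<forall>l\<in>{1..n}. l \<noteq> i \<longrightarrow> H i (qexp l) = 0"
    "act (scal (of_int C)) (act f x) = (\<Sum>i\<in>{1..n}. act (H i) x)"
proof -
  obtain C :: int where C: "C \<noteq> 0"
    "\<And>v. \<forall>i\<in>{1..n}. plocal p (v (qexp i)) \<Longrightarrow>
       \<exists>h\<in>opA p q. \<forall>i\<in>{1..n}. h (qexp i) = of_int C * v (qexp i)"
    using interpolation_up_to_denominator[of n] by blast
  define v where "v i k = (if k = qexp i then f k else 0)" for i k
  have "\<forall>i\<in>{1..n}. \<exists>h\<in>opA p q. \<forall>l\<in>{1..n}. h (qexp l) = of_int C * v i (qexp l)"
    using plocal_opA_from[OF f] by (intro ballI C(2)) (simp add: v_def)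
  then obtain H where H: "\<And>i. i \<in> {1..n} \<Longrightarrow> H i \<in> opA p q"
    "\<And>i l. i \<in> {1..n} \<Longrightarrow> l \<in> {1..n} \<Longrightarrow> H i (qexp l) = of_int C * v i (qexp l)"
    by metis
  have v: "v i (qexp l) = (if l = i then f (qexp l) else 0)" if "i \<in> {1..n}" "l \<in> {1..n}" for i l
    using that qexp_inject[of l i] by (auto simp: v_def)
  have "act (scal (of_int C)) (act f x) = act (\<lambda>k. of_int C * f k) x"
    using f by (simp add: act_scal_act)
  also have "\<dots> = act (\<lambda>k. \<Sum>i\<in>{1..n}. H i k) x"
  proof (rule act_cong_nodes)
    show "(\<lambda>k. of_int C * f k) \<in> opA p q" using f by (intro opA_from_scale) auto
    show "(\<lambda>k. \<Sum>i\<in>{1..n}. H i k) \<in> opA p q" using H(1) by (intro opA_from_sum) auto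
    fix l assume l: "l \<in> {1..n}"
    then have "(\<Sum>i\<in>{1..n}. H i (qexp l)) = (\<Sum>i\<in>{1..n}. if i = l then of_int C * f (qexp l) else 0)"
      using H(2) v by (intro sum.cong) auto
    with l show "of_int C * f (qexp l) = (\<Sum>i\<in>{1..n}. H i (qexp l))" by simp
  qed
  also have "\<dots> = (\<Sum>i\<in>{1..n}. act (H i) x)" using H(1) by (intro act_sum) auto
  finally have decomp: "act (scal (of_int C)) (act f x) = (\<Sum>i\<in>{1..n}. act (H i) x)" .
  moreover have "\<forall>i\<in>{1..n}. \<forall>l\<in>{1..n}. l \<noteq> i \<longrightarrow> H i (qexp l) = 0"
    using H(2) v by simp
  ultimately show thesis using that[of C H] C(1) H(1) by blast
qed

lemma Rcyc_eigen_decomposition: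
  "\<forall>j. plocal_unit p j \<longrightarrow> (\<forall>y\<in>Rcyc p act x.
     \<exists>c zs. c \<noteq> 0 \<and> plocal p c \<and> act (scal c) y = sum_list (map fst zs) \<and>
       (\<forall>(z, k)\<in>set zs. z \<in> Rcyc p act x \<and>
          (\<exists>d. d \<noteq> 0 \<and> plocal p d \<and>
             act (scal d) (act (adams j) z - act (scal (j powi k)) z) = 0)))"
proof (intro allI impI ballI)
  fix j y assume j: "plocal_unit p j" and "y \<in> Rcyc p act x"
  then obtain f where f: "f \<in> opA p q" "y = act f x" unfolding Rcyc_eq_Acyc Acyc_def by blast
  obtain C :: int and H where C: "C \<noteq> 0" and H: "\<forall>i\<in>{1..n}. H i \<in> opA p q"
    "\<forall>i\<in>{1..n}. \<forall>l\<in>{1..n}. l \<noteq> i \<longrightarrow> H i (qexp l) = 0"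
    and decomp: "act (scal (of_int C)) (act f x) = (\<Sum>i\<in>{1..n}. act (H i) x)"
    using act_node_decomposition[OF f(1)] .
  define zs where "zs = map (\<lambda>i. (act (H i) x, qexp i)) [1..<Suc n]"
  have "sum_list (map fst zs) = sum_list (map (\<lambda>i. act (H i) x) [1..<Suc n])"
    unfolding zs_def by (simp add: comp_def)
  also have "\<dots> = (\<Sum>i\<in>{1..n}. act (H i) x)"
    by (subst sum_set_upt_conv_sum_list_nat[symmetric]) (simp only: set_upt atLeastLessThanSuc_atLeastAtMost)
  finally have sum_zs: "act (scal (of_int C)) y = sum_list (map fst zs)" unfolding decomp f(2) ..
  have eigen: "\<forall>(z, k)\<in>set zs. z \<in> Rcyc p act x \<and>
      (\<exists>d. d \<noteq> 0 \<and> plocal p d \<and> act (scal d) (act (adams j) z - act (scal (j powi k)) z) = 0)"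
  proof clarify
    fix z k assume "(z, k) \<in> set zs"
    then have "(z, k) \<in> (\<lambda>i. (act (H i) x, qexp i)) ` {1..n}"
      unfolding zs_def by (simp del: upt_Suc add: atLeastLessThanSuc_atLeastAtMost)
    then obtain i where i: "i \<in> {1..n}" "z = act (H i) x" "k = qexp i" by blast
    have "z \<in> Rcyc p act x" unfolding Rcyc_eq_Acyc Acyc_def i(2) using H(1) i(1) by blast
    moreover have "act (adams j) z = act (scal (j powi k)) z"
      unfolding i(2,3) using H i(1) j by (intro act_adams_node_supported) auto
    ultimately show "z \<in> Rcyc p act x \<and>
        (\<exists>d. d \<noteq> 0 \<and> plocal p d \<and> act (scal d) (act (adams j) z - act (scal (j powi k)) z) = 0)"
      using act_one by (intro conjI exI[of _ 1]) (simp_all add: scal_def)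
  qed
  show "\<exists>c zs. c \<noteq> 0 \<and> plocal p c \<and> act (scal c) y = sum_list (map fst zs) \<and>
       (\<forall>(z, k)\<in>set zs. z \<in> Rcyc p act x \<and>
          (\<exists>d. d \<noteq> 0 \<and> plocal p d \<and>
             act (scal d) (act (adams j) z - act (scal (j powi k)) z) = 0))"
    using C sum_zs eigen by (intro exI[of _ "of_int C"] exI[of _ zs] conjI) simp_all
qed

lemma act_prime_power_multiple:
  obtains M where "\<And>m g. g \<in> opA p q \<Longrightarrow> \<forall>i\<in>{1..n}. plocal p (g (qexp i) / of_nat p ^ (m + M)) \<Longrightarrow>
    \<exists>z\<in>Acyc p q act x. act g x = act (scal (of_nat (p ^ m))) z"
proof -
  obtain M where M: "\<And>m v. \<forall>i\<in>{1..n}. plocal p (v (qexp i) / of_nat p ^ (m + M)) \<Longrightarrow>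
       \<exists>h\<in>opA p q. \<forall>i\<in>{1..n}. v (qexp i) = of_nat p ^ m * h (qexp i)"
    using interpolation_up_to_prime_power by blast
  have "\<exists>z\<in>Acyc p q act x. act g x = act (scal (of_nat (p ^ m))) z"
    if g: "g \<in> opA p q" "\<forall>i\<in>{1..n}. plocal p (g (qexp i) / of_nat p ^ (m + M))" for m g
  proof -
    obtain h where h: "h \<in> opA p q" "\<forall>i\<in>{1..n}. g (qexp i) = of_nat p ^ m * h (qexp i)"
      using M g(2) by blast
    have "act g x = act (\<lambda>k. of_nat (p ^ m) * h k) x"
      using g h by (intro act_cong_nodes opA_from_scale) auto
    also have "\<dots> = act (scal (of_nat (p ^ m))) (act h x)"
      using act_scal_act[OF plocal_of_nat[of "p ^ m"] h(1)] by simp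
    finally show ?thesis using h(1) unfolding Acyc_def by blast
  qed
  with that show thesis by blast
qed

lemma Rcyc_adams_congruence:
  "\<exists>k0. \<forall>k\<ge>k0. \<forall>j j'. plocal_unit p j \<longrightarrow> plocal_unit p j' \<longrightarrow>
     plocal p ((j - j') / of_nat (p ^ k)) \<longrightarrow>
     (\<forall>y\<in>Rcyc p act x. \<exists>z\<in>Rcyc p act x.
        act (adams j) y - act (adams j') y = act (scal (of_nat (p ^ m))) z)"
proof -
  obtain M where M: "\<And>g. g \<in> opA p q \<Longrightarrow> \<forall>i\<in>{1..n}. plocal p (g (qexp i) / of_nat p ^ (m + M)) \<Longrightarrow>
      \<exists>z\<in>Acyc p q act x. act g x = act (scal (of_nat (p ^ m))) z"
    using act_prime_power_multiple by metis
  have "\<exists>z\<in>Rcyc p act x. act (adams j) y - act (adams j') y = act (scal (of_nat (p ^ m))) z"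
    if k: "m + M \<le> k" and j: "plocal_unit p j" and j': "plocal_unit p j'"
      and jj': "plocal p ((j - j') / of_nat (p ^ k))" and y: "y \<in> Rcyc p act x" for k j j' y
  proof -
    obtain f where f: "f \<in> opA p q" "y = act f x" using y unfolding Rcyc_eq_Acyc Acyc_def by blast
    define g where "g k = (adams j k - adams j' k) * f k" for k
    have "g \<in> opA p q"
      unfolding g_def using adams_in_opA[OF j] adams_in_opA[OF j'] f(1) by (intro opA_mult opA_from_diff)
    moreover have "plocal p (g (qexp i) / of_nat p ^ (m + M))" for i
    proof -
      have "g (qexp i) / of_nat p ^ (m + M)
          = (j powi qexp i - j' powi qexp i) / of_nat p ^ (m + M) * f (qexp i)"
        unfolding g_def adams_def by simp
      then show ?thesis
        using plocal_mult[OF plocal_powi_diff_div_prime_power[OF j j' jj' k] plocal_opA_from[OF f(1)]]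
        by (simp only:)
    qed
    moreover have "act (adams j) y - act (adams j') y = act g x"
      unfolding f(2) g_def using adams_in_opA[OF j] adams_in_opA[OF j'] f(1)
      by (simp add: act_mult act_diff opA_from_diff)
    ultimately show ?thesis using M unfolding Rcyc_eq_Acyc by auto
  qed
  then show ?thesis by blast
qed

end

theorem theorem4p2:
  fixes p :: nat and q :: int
    and act :: "(int \<Rightarrow> rat) \<Rightarrow> 'm::ab_group_add \<Rightarrow> 'm"
  assumes "prime p" and "odd p"
    and "primitive_mod_p2 p q"
    and "discrete_A_module p q act"
  shows "bousfield_module p act"
proof -
  obtain N where "\<And>x. \<forall>a\<in>opA_from p q (N x). act a x = 0"
    using assms(4) unfolding discrete_A_module_def by metis
  then have element: "annihilated_element p q act x (N x)" for x
    using assms primitive_mod_p2_coprime[OF assms(1,3)] primitive_mod_p2_abs_gt_1[OF assms(1-3)]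
    unfolding discrete_A_module_def by unfold_locales auto
  show ?thesis
    unfolding bousfield_module_def
    using annihilated_element.Rcyc_finitely_generated[OF element]
      annihilated_element.Rcyc_eigen_decomposition[OF element]
      annihilated_element.Rcyc_adams_congruence[OF element]
    by simp
qed

end
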